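(* Let $\theta$ be a parameter vector and let $u_\theta(x,y)$ and $s_\theta(x,y)$ be real-valued functions of $\theta$ (differentiable in $\theta$) for each prompt $x$ and response $y$. For a fixed triple $(x,y_w,y_l)$ put $\Delta u_\theta = u_\theta(x,y_w)-u_\theta(x,y_l)$, $\mu=\sigma(\Delta u_\theta)$ where $\sigma(t)=1/(1+e^{-t})$, and let $\tau=\tau(\theta)\in(0,\infty)$ be the concentration, namely $\tau=\mathrm{Softplus}(s_\theta(x,y_w))+\mathrm{Softplus}(s_\theta(x,y_l))+1$ with $\mathrm{Softplus}(t)=\log(1+e^t)$. Let $\alpha_0,\beta_0>0$ and $\lambda>0$ be fixed constants (independent of $\theta$), set $\alpha=\mu\tau$, $\beta=(1-\mu)\tau$, and define $$\mathcal{L}_{\mathrm{ICRM}} = -\bigl(\psi(\mu\tau)-\psi(\tau)\bigr) + \lambda\, \mathbb{D}_{\mathrm{KL}}\bigl(\mathrm{Beta}(\alpha,\beta)\,\|\,\mathrm{Beta}(\alpha_0,\beta_0)\bigr).$$ Let $\varepsilon := 1-\mu$. Then, for finite $\tau\in(0,\infty)$ held fixed, as $\varepsilon\to 0^+$, $$\nabla_\theta \mathcal{L}_{\mathrm{ICRM}} = c_u\,\nabla_\theta \Delta u_\theta + c_\tau\,\nabla_\theta \tau,\qquad c_u = \frac{\lambda\beta_0}{\varepsilon\tau}+O(1),\quad c_\tau = -\frac{\lambda\beta_0}{\varepsilon\tau^2}+O(1),$$ i.e. the utility coefficient behaves to leading order like $\lambda\beta_0/(\varepsilon\tau)$ and the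 confidence coefficient like $-\lambda\beta_0/(\varepsilon\tau^2)$.
   Context: $\psi(x)=\frac{d}{dx}\log\Gamma(x)$ is the digamma function. $\mathrm{Beta}(a,b)$ denotes the Beta distribution on $[0,1]$ with parameters $a,b>0$, and $\mathbb{D}_{\mathrm{KL}}(q\|p)$ is the Kullback–Leibler divergence, which for Betas has the closed form $\mathbb{D}_{\mathrm{KL}}(\mathrm{Beta}(\alpha,\beta)\|\mathrm{Beta}(\alpha_0,\beta_0)) = \log\frac{\Gamma(\alpha+\beta)}{\Gamma(\alpha)\Gamma(\beta)}-\log\frac{\Gamma(\alpha_0+\beta_0)}{\Gamma(\alpha_0)\Gamma(\beta_0)}+(\alpha-\alpha_0)[\psi(\alpha)-\psi(\alpha+\beta)]+(\beta-\beta_0)[\psi(\beta)-\psi(\alpha+\beta)]$. The gradient $\nabla_\theta\mathcal{L}_{\mathrm{ICRM}}$ is computed by the chain rule through $\mu=\sigma(\Delta u_\theta)$ and $\tau$, i.e. $\nabla_\theta\mathcal{L}=\frac{\partial\mathcal{L}}{\partial\mu}\mu(1-\mu)\nabla_\theta\Delta u_\theta+\frac{\partial\mathcal{L}}{\partial\tau}\nabla_\theta\tau$. *)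

theory Defs
  imports "HOL-Analysis.Analysis" "HOL-Library.Landau_Symbols"
begin

definition sigmoid :: "real \<Rightarrow> real" where
  "sigmoid t = 1 / (1 + exp (- t))"

definition softplus :: "real \<Rightarrow> real" where
  "softplus t = ln (1 + exp t)"

definition beta_KL :: "real \<Rightarrow> real \<Rightarrow> real \<Rightarrow> real \<Rightarrow> real" where
  "beta_KL a b a0 b0 =
     ln (Gamma (a + b) / (Gamma a * Gamma b))
   - ln (Gamma (a0 + b0) / (Gamma a0 * Gamma b0))
   + (a - a0) * (Digamma a - Digamma (a + b))
   + (b - b0) * (Digamma b - Digamma (a + b))"

definition icrm_loss :: "real \<Rightarrow> real \<Rightarrow> real \<Rightarrow> real \<Rightarrow> real \<Rightarrow> real" where
  "icrm_loss lam a0 b0 mu tau =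
     - (Digamma (mu * tau) - Digamma tau) + lam * beta_KL (mu * tau) ((1 - mu) * tau) a0 b0"

text \<open>Chain-rule coefficients: c_u = dL/dmu * mu (1 - mu), c_tau = dL/dtau.\<close>
definition coef_u :: "real \<Rightarrow> real \<Rightarrow> real \<Rightarrow> real \<Rightarrow> real \<Rightarrow> real" where
  "coef_u lam a0 b0 mu tau = deriv (\<lambda>m. icrm_loss lam a0 b0 m tau) mu * (mu * (1 - mu))"

definition coef_tau :: "real \<Rightarrow> real \<Rightarrow> real \<Rightarrow> real \<Rightarrow> real \<Rightarrow> real" where
  "coef_tau lam a0 b0 mu tau = deriv (\<lambda>t. icrm_loss lam a0 b0 mu t) tau"

end

theory Submission
  imports Defs
begin

text \<open>By the chain rule the gradient of the loss combines the partial derivatives of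
  \<open>icrm_loss\<close> in \<open>\<mu>\<close> and \<open>\<tau>\<close>, which are explicit in the trigamma function
  \<open>\<psi>' = Polygamma 1\<close>. As \<open>\<epsilon> = 1 - \<mu> \<rightarrow> 0\<^sup>+\<close>, the argument \<open>\<beta> = \<epsilon>\<tau>\<close> tends to \<open>0\<close>
  and the only singular term is the KL term \<open>\<lambda>(\<beta> - \<beta>\<^sub>0)\<psi>'(\<beta>)\<close>. The recurrence
  \<open>\<psi>'(z) = 1/z\<^sup>2 + \<psi>'(z + 1)\<close> isolates its pole part \<open>\<lambda>(\<beta> - \<beta>\<^sub>0)/\<beta>\<^sup>2\<close>, which produces
  the leading terms \<open>\<lambda>\<beta>\<^sub>0/(\<epsilon>\<tau>)\<close> and \<open>-\<lambda>\<beta>\<^sub>0/(\<epsilon>\<tau>\<^sup>2)\<close>; everything else is continuous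
  at \<open>\<epsilon> = 0\<close>, hence bounded.\<close>

lemma has_real_derivative_sigmoid: "(sigmoid has_real_derivative sigmoid x * (1 - sigmoid x)) (at x)"
proof -
  have "1 + exp (- x) > 0"
    by (simp add: add_pos_pos)
  then show ?thesis
    unfolding sigmoid_def
    by (auto intro!: derivative_eq_intros simp: field_simps power2_eq_square)
qed

lemma sigmoid_pos: "0 < sigmoid x"
  unfolding sigmoid_def by (simp add: add_pos_pos)

lemma sigmoid_less_1: "sigmoid x < 1"
  unfolding sigmoid_def by (simp add: add_pos_pos)

lemma has_real_derivative_softplus: "(softplus has_real_derivative sigmoid x) (at x)"
proof -
  have "1 + exp x > 0"
    by (simp add: add_pos_pos)
  then show ?thesis
    unfolding softplus_def sigmoid_def
    by (auto intro!: derivative_eq_intros simp: field_simps exp_minus)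
qed

lemma softplus_differentiable: "softplus differentiable (at x)"
  using has_real_derivative_softplus unfolding has_field_derivative_def differentiable_def by blast

lemma softplus_pos: "0 < softplus x"
  unfolding softplus_def by (simp add: add_pos_pos)

definition icrm_loss_dmu :: "real \<Rightarrow> real \<Rightarrow> real \<Rightarrow> real \<Rightarrow> real \<Rightarrow> real" where
  "icrm_loss_dmu lam a0 b0 m t =
     - t * Polygamma 1 (m * t)
   + lam * t * ((m * t - a0) * Polygamma 1 (m * t) - ((1 - m) * t - b0) * Polygamma 1 ((1 - m) * t))"

definition icrm_loss_dtau :: "real \<Rightarrow> real \<Rightarrow> real \<Rightarrow> real \<Rightarrow> real \<Rightarrow> real" where
  "icrm_loss_dtau lam a0 b0 m t =
     - m * Polygamma 1 (m * t) + Polygamma 1 t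
   + lam * ((m * t - a0) * (m * Polygamma 1 (m * t) - Polygamma 1 t)
          + ((1 - m) * t - b0) * ((1 - m) * Polygamma 1 ((1 - m) * t) - Polygamma 1 t))"

lemma icrm_loss_eq:
  "icrm_loss lam a0 b0 m t =
     - (Digamma (m * t) - Digamma t)
   + lam * (ln (Gamma t / (Gamma (m * t) * Gamma ((1 - m) * t)))
          - ln (Gamma (a0 + b0) / (Gamma a0 * Gamma b0))
          + (m * t - a0) * (Digamma (m * t) - Digamma t)
          + ((1 - m) * t - b0) * (Digamma ((1 - m) * t) - Digamma t))"
proof -
  have "m * t + (1 - m) * t = t" by (simp add: algebra_simps)
  then show ?thesis by (simp add: icrm_loss_def beta_KL_def)
qed

lemma pos_not_in_nonpos_Ints: "(x::real) > 0 \<Longrightarrow> x \<notin> \<int>\<^sub>\<le>\<^sub>0"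
  by auto

lemma has_derivative_Polygamma_pos:
  fixes g :: "'a::real_normed_vector \<Rightarrow> real"
  assumes "(g has_derivative g') (at x)" and "g x > 0"
  shows "((\<lambda>x. Polygamma n (g x)) has_derivative (\<lambda>h. g' h * Polygamma (Suc n) (g x))) (at x)"
  using assms by (intro DERIV_compose_FDERIV has_field_derivative_Polygamma pos_not_in_nonpos_Ints)

lemma has_derivative_Gamma_pos:
  fixes g :: "'a::real_normed_vector \<Rightarrow> real"
  assumes "(g has_derivative g') (at x)" and "g x > 0"
  shows "((\<lambda>x. Gamma (g x)) has_derivative (\<lambda>h. g' h * (Gamma (g x) * Digamma (g x)))) (at x)"
  using assms by (intro DERIV_compose_FDERIV has_field_derivative_Gamma pos_not_in_nonpos_Ints)

lemma has_derivative_icrm_loss: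
  fixes M T :: "'a::real_normed_vector \<Rightarrow> real"
  assumes M: "(M has_derivative M') (at x)" and T: "(T has_derivative T') (at x)"
    and "0 < M x" and "M x < 1" and "0 < T x"
  shows "((\<lambda>x. icrm_loss lam a0 b0 (M x) (T x)) has_derivative
     (\<lambda>h. icrm_loss_dmu lam a0 b0 (M x) (T x) * M' h
        + icrm_loss_dtau lam a0 b0 (M x) (T x) * T' h)) (at x)"
proof -
  have pos: "M x * T x > 0" "(1 - M x) * T x > 0" "T x > 0"
    using assms(3-5) by simp_all
  then have Gamma_pos: "Gamma (M x * T x) > 0" "Gamma ((1 - M x) * T x) > 0" "Gamma (T x) > 0"
    by auto
  then have ratio_pos: "Gamma (T x) / (Gamma (M x * T x) * Gamma ((1 - M x) * T x)) > 0"
    and denom_nonzero: "Gamma (M x * T x) * Gamma ((1 - M x) * T x) \<noteq> 0"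
    by simp_all
  show ?thesis
    unfolding icrm_loss_eq
    apply (rule has_derivative_eq_rhs)
     apply (rule has_derivative_const has_derivative_add has_derivative_diff has_derivative_mult
        has_derivative_minus has_derivative_Polygamma_pos has_derivative_Gamma_pos
        has_derivative_ln has_derivative_divide' M T pos ratio_pos denom_nonzero)+
    using Gamma_pos by (simp add: fun_eq_iff icrm_loss_dmu_def icrm_loss_dtau_def field_simps)
qed

lemma has_real_derivative_icrm_loss_mu:
  assumes "0 < m" "m < 1" "0 < t"
  shows "((\<lambda>m. icrm_loss lam a0 b0 m t) has_real_derivative icrm_loss_dmu lam a0 b0 m t) (at m)"
  unfolding has_field_derivative_def
  using assms
  by (intro has_derivative_eq_rhs[OF has_derivative_icrm_loss[OF has_derivative_ident has_derivative_const]])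
    (auto simp: fun_eq_iff)

lemma has_real_derivative_icrm_loss_tau:
  assumes "0 < m" "m < 1" "0 < t"
  shows "((\<lambda>t. icrm_loss lam a0 b0 m t) has_real_derivative icrm_loss_dtau lam a0 b0 m t) (at t)"
  unfolding has_field_derivative_def
  using assms
  by (intro has_derivative_eq_rhs[OF has_derivative_icrm_loss[OF has_derivative_const has_derivative_ident]])
    (auto simp: fun_eq_iff)

lemma coef_u_eq:
  "0 < m \<Longrightarrow> m < 1 \<Longrightarrow> 0 < t \<Longrightarrow>
   coef_u lam a0 b0 m t = icrm_loss_dmu lam a0 b0 m t * (m * (1 - m))"
  unfolding coef_u_def by (simp add: DERIV_imp_deriv has_real_derivative_icrm_loss_mu)

lemma coef_tau_eq:
  "0 < m \<Longrightarrow> m < 1 \<Longrightarrow> 0 < t \<Longrightarrow> coef_tau lam a0 b0 m t = icrm_loss_dtau lam a0 b0 m t"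
  unfolding coef_tau_def by (simp add: DERIV_imp_deriv has_real_derivative_icrm_loss_tau)

lemma Polygamma_1_eq_pole_plus:
  fixes z :: "'a::{real_normed_field,banach}"
  assumes "z \<noteq> 0"
  shows "Polygamma 1 z = 1 / z\<^sup>2 + Polygamma 1 (z + 1)"
  using Polygamma_plus1[OF assms, of 1] by (simp add: power2_eq_square)

lemma bigo_1_if_eventually_eq_isCont:
  fixes f g :: "'a::t2_space \<Rightarrow> real"
  assumes "isCont g a" and "\<forall>\<^sub>F x in at a within S. f x = g x"
  shows "f \<in> O[at a within S](\<lambda>_. 1)"
proof -
  have "(g \<longlongrightarrow> g a) (at a within S)"
    using continuous_at_imp_continuous_within[OF assms(1)] by (simp add: continuous_within)
  then have "g \<in> O[at a within S](\<lambda>_. 1)"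
    by (intro bigoI_tendsto[where c = "g a"]) simp_all
  then show ?thesis
    using landau_o.big.in_cong[OF assms(2)] by simp
qed

definition coef_u_regular :: "real \<Rightarrow> real \<Rightarrow> real \<Rightarrow> real \<Rightarrow> real \<Rightarrow> real" where
  "coef_u_regular lam a0 b0 t e =
     (1 - e) * e * (- t * Polygamma 1 ((1 - e) * t)
                    + lam * t * ((1 - e) * t - a0) * Polygamma 1 ((1 - e) * t)
                    - lam * t * (e * t - b0) * Polygamma 1 (e * t + 1))
   - lam * (1 - e) - lam * b0 / t"

definition coef_tau_regular :: "real \<Rightarrow> real \<Rightarrow> real \<Rightarrow> real \<Rightarrow> real \<Rightarrow> real" where
  "coef_tau_regular lam a0 b0 t e =
     - (1 - e) * Polygamma 1 ((1 - e) * t) + Polygamma 1 t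
   + lam * (((1 - e) * t - a0) * ((1 - e) * Polygamma 1 ((1 - e) * t) - Polygamma 1 t)
          + (e * t - b0) * (e * Polygamma 1 (e * t + 1) - Polygamma 1 t) + 1 / t)"

lemma coef_u_one_minus_eq:
  assumes "0 < e" "e < 1" "0 < t"
  shows "coef_u lam a0 b0 (1 - e) t = lam * b0 / (e * t) + coef_u_regular lam a0 b0 t e"
proof -
  have mu_bounds: "0 < 1 - e" "1 - e < 1" and one_minus: "1 - (1 - e) = e"
    using assms by simp_all
  have pole: "Polygamma 1 (e * t) = 1 / (e * t)\<^sup>2 + Polygamma 1 (e * t + 1)"
    using assms by (intro Polygamma_1_eq_pole_plus) simp
  show ?thesis
    using assms
    unfolding coef_u_eq[OF mu_bounds assms(3)] icrm_loss_dmu_def coef_u_regular_def one_minus pole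
    by (simp add: field_simps power2_eq_square)
qed

lemma coef_tau_one_minus_eq:
  assumes "0 < e" "e < 1" "0 < t"
  shows "coef_tau lam a0 b0 (1 - e) t = - lam * b0 / (e * t\<^sup>2) + coef_tau_regular lam a0 b0 t e"
proof -
  have mu_bounds: "0 < 1 - e" "1 - e < 1" and one_minus: "1 - (1 - e) = e"
    using assms by simp_all
  have pole: "Polygamma 1 (e * t) = 1 / (e * t)\<^sup>2 + Polygamma 1 (e * t + 1)"
    using assms by (intro Polygamma_1_eq_pole_plus) simp
  show ?thesis
    using assms
    unfolding coef_tau_eq[OF mu_bounds assms(3)] icrm_loss_dtau_def coef_tau_regular_def one_minus pole
    by (simp add: field_simps power2_eq_square)
qed

lemma coef_u_one_minus_bigo:
  assumes "0 < t"
  shows "(\<lambda>\<epsilon>. coef_u lam a0 b0 (1 - \<epsilon>) t - lam * b0 / (\<epsilon> * t)) \<in> O[at_right 0](\<lambda>_. 1)"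
proof (rule bigo_1_if_eventually_eq_isCont)
  show "isCont (coef_u_regular lam a0 b0 t) 0"
    unfolding coef_u_regular_def using assms
    by (intro continuous_intros pos_not_in_nonpos_Ints) auto
  show "\<forall>\<^sub>F \<epsilon> in at_right 0.
      coef_u lam a0 b0 (1 - \<epsilon>) t - lam * b0 / (\<epsilon> * t) = coef_u_regular lam a0 b0 t \<epsilon>"
    unfolding eventually_at_right_field
    using assms by (intro exI[of _ 1]) (simp add: coef_u_one_minus_eq)
qed

lemma coef_tau_one_minus_bigo:
  assumes "0 < t"
  shows "(\<lambda>\<epsilon>. coef_tau lam a0 b0 (1 - \<epsilon>) t + lam * b0 / (\<epsilon> * t\<^sup>2)) \<in> O[at_right 0](\<lambda>_. 1)"
proof (rule bigo_1_if_eventually_eq_isCont)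
  show "isCont (coef_tau_regular lam a0 b0 t) 0"
    unfolding coef_tau_regular_def using assms
    by (intro continuous_intros pos_not_in_nonpos_Ints) auto
  show "\<forall>\<^sub>F \<epsilon> in at_right 0.
      coef_tau lam a0 b0 (1 - \<epsilon>) t + lam * b0 / (\<epsilon> * t\<^sup>2) = coef_tau_regular lam a0 b0 t \<epsilon>"
    unfolding eventually_at_right_field
    using assms by (intro exI[of _ 1]) (simp add: coef_tau_one_minus_eq)
qed

lemma has_derivative_icrm_loss_sigmoid:
  fixes D T :: "'a::real_normed_vector \<Rightarrow> real"
  assumes D: "(D has_derivative D') (at x)" and T: "(T has_derivative T') (at x)" and "0 < T x"
  shows "((\<lambda>x. icrm_loss lam a0 b0 (sigmoid (D x)) (T x)) has_derivative
     (\<lambda>h. coef_u lam a0 b0 (sigmoid (D x)) (T x) * D' h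
        + coef_tau lam a0 b0 (sigmoid (D x)) (T x) * T' h)) (at x)"
proof -
  let ?m = "sigmoid (D x)"
  have m: "0 < ?m" "?m < 1"
    by (simp_all add: sigmoid_pos sigmoid_less_1)
  have "((\<lambda>x. sigmoid (D x)) has_derivative (\<lambda>h. D' h * (?m * (1 - ?m)))) (at x)"
    by (rule DERIV_compose_FDERIV[OF has_real_derivative_sigmoid D])
  from has_derivative_icrm_loss[OF this T m \<open>0 < T x\<close>] show ?thesis
    by (rule has_derivative_eq_rhs) (simp add: coef_u_eq coef_tau_eq m \<open>0 < T x\<close> fun_eq_iff)
qed

theorem lemma8p1:
  fixes u s :: "'x \<Rightarrow> 'y \<Rightarrow> 'a::real_normed_vector \<Rightarrow> real"
    and x :: 'x and yw yl :: 'y and lam a0 b0 :: real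
  assumes "lam > 0" and "a0 > 0" and "b0 > 0"
    and "\<And>\<theta>. u x yw differentiable at \<theta>" and "\<And>\<theta>. u x yl differentiable at \<theta>"
    and "\<And>\<theta>. s x yw differentiable at \<theta>" and "\<And>\<theta>. s x yl differentiable at \<theta>"
  defines "du \<equiv> (\<lambda>\<theta>. u x yw \<theta> - u x yl \<theta>)"
    and "mu \<equiv> (\<lambda>\<theta>. sigmoid (u x yw \<theta> - u x yl \<theta>))"
    and "tau \<equiv> (\<lambda>\<theta>. softplus (s x yw \<theta>) + softplus (s x yl \<theta>) + 1)"
  shows "(\<forall>\<theta>. ((\<lambda>\<theta>. icrm_loss lam a0 b0 (mu \<theta>) (tau \<theta>)) has_derivative
              (\<lambda>h. coef_u lam a0 b0 (mu \<theta>) (tau \<theta>) * frechet_derivative du (at \<theta>) h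
                  + coef_tau lam a0 b0 (mu \<theta>) (tau \<theta>) * frechet_derivative tau (at \<theta>) h)) (at \<theta>))
       \<and> (\<forall>t>0. (\<lambda>\<epsilon>. coef_u lam a0 b0 (1 - \<epsilon>) t - lam * b0 / (\<epsilon> * t)) \<in> O[at_right 0](\<lambda>_. 1))
       \<and> (\<forall>t>0. (\<lambda>\<epsilon>. coef_tau lam a0 b0 (1 - \<epsilon>) t + lam * b0 / (\<epsilon> * t\<^sup>2)) \<in> O[at_right 0](\<lambda>_. 1))"
proof (intro conjI allI impI coef_u_one_minus_bigo coef_tau_one_minus_bigo)
  fix \<theta> :: 'a
  have "du differentiable at \<theta>"
    unfolding du_def using assms(4,5) by (rule differentiable_diff)
  then have du': "(du has_derivative frechet_derivative du (at \<theta>)) (at \<theta>)"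
    by (rule frechet_derivative_works[THEN iffD1])
  have "tau differentiable at \<theta>"
    unfolding tau_def
    using differentiable_compose[OF softplus_differentiable assms(6)]
      differentiable_compose[OF softplus_differentiable assms(7)]
    by (intro differentiable_add differentiable_const)
  then have tau': "(tau has_derivative frechet_derivative tau (at \<theta>)) (at \<theta>)"
    by (rule frechet_derivative_works[THEN iffD1])
  have "0 < tau \<theta>"
    unfolding tau_def using softplus_pos[of "s x yw \<theta>"] softplus_pos[of "s x yl \<theta>"] by simp
  moreover have "mu = (\<lambda>\<theta>. sigmoid (du \<theta>))"
    unfolding mu_def du_def ..
  ultimately show "((\<lambda>\<theta>. icrm_loss lam a0 b0 (mu \<theta>) (tau \<theta>)) has_derivative
      (\<lambda>h. coef_u lam a0 b0 (mu \<theta>) (tau \<theta>) * frechet_derivative du (at \<theta>) h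
         + coef_tau lam a0 b0 (mu \<theta>) (tau \<theta>) * frechet_derivative tau (at \<theta>) h)) (at \<theta>)"
    using has_derivative_icrm_loss_sigmoid[OF du' tau'] by simp
qed

end
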